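(* Let $I$ and $J$ be two conserved intervals of $\mathcal{P}$. If there exists an element $f\in F_I\cap F_J$, then $\mathrm{Container}(I)=\mathrm{Container}(J)$.
   Context: Let $n\geq 2$ and let $\mathcal{P}=\{P_1,\ldots,P_K\}$ be signed permutations of $\{1,\ldots,n\}$: each $P_k$ is an ordering of $1,\ldots,n$ in which each element carries a sign $+$ or $-$. Assume $P_1=(+1,+2,\ldots,+n)$ and that every $P_k$ has first element $+1$ and last element $+n$. For integers $i\leq j$ write $(i..j)=\{i,\ldots,j\}$. A conserved interval of $\mathcal{P}$ is either a singleton, or a set $(a..c)$ with $a<c$ which (ignoring signs) occupies consecutive positions in every $P_k$ and which, in every $P_k$, has either $+a$ at its left end and $+c$ at its right end, or $-c$ at its left end and $-a$ at its right end. Two intervals $(i..j)$ and $(k..l)$ overlap if $i<k\leq j<l$ or $k<i\leq l<j$. A conserved interval is strong if it has at least two elements and overlaps no other conserved interval. For a conserved interval $I=(a..c)$, a set $\{f_1,\ldots,f_k\}$ with $a=f_1<\cdots<f_k=c$ is a set of frontiers of $I$ if $(f_i..f_j)$ is conserved for all $1\leq i<j\leq k$; $F_I$ denotes the unique inclusion-maximal set of frontiers of $I$ (the union of all sets of frontiers of $I$). $\mathrm{Container}(I)$ is the smallest strong conserved interval containing $I$. *)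

theory Defs
  imports Main
begin

text \<open>A signed permutation of 1..n is a list of nonzero integers; the absolute value
  is the element, the sign of the entry is the sign of the element.
  Intervals (i..j) are represented by pairs (i,j) of naturals with i <= j.\<close>

definition signed_perm :: "nat \<Rightarrow> int list \<Rightarrow> bool" where
  "signed_perm n p \<longleftrightarrow> length p = n \<and> distinct (map (\<lambda>x. nat \<bar>x\<bar>) p)
     \<and> (\<lambda>x. nat \<bar>x\<bar>) ` set p = {1..n}"

definition valid_family :: "nat \<Rightarrow> int list list \<Rightarrow> bool" where
  "valid_family n Ps \<longleftrightarrow> 2 \<le> n \<and> Ps \<noteq> [] \<and> hd Ps = map int [1..<n+1]
     \<and> (\<forall>p\<in>set Ps. signed_perm n p \<and> hd p = 1 \<and> last p = int n)"

definition ivl :: "nat \<times> nat \<Rightarrow> nat set" where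
  "ivl I = {fst I..snd I}"

definition conserved :: "nat \<Rightarrow> int list list \<Rightarrow> nat \<times> nat \<Rightarrow> bool" where
  "conserved n Ps I \<longleftrightarrow> (let a = fst I; c = snd I in
     1 \<le> a \<and> a \<le> c \<and> c \<le> n \<and>
     (a < c \<longrightarrow> (\<forall>p\<in>set Ps. \<exists>i. i + (c - a) < length p
        \<and> (\<lambda>x. nat \<bar>x\<bar>) ` set (take (c - a + 1) (drop i p)) = {a..c}
        \<and> ((p ! i = int a \<and> p ! (i + (c - a)) = int c)
           \<or> (p ! i = - int c \<and> p ! (i + (c - a)) = - int a)))))"

definition overlap :: "nat \<times> nat \<Rightarrow> nat \<times> nat \<Rightarrow> bool" where
  "overlap I J \<longleftrightarrow> (let i = fst I; j = snd I; k = fst J; l = snd J in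
     (i < k \<and> k \<le> j \<and> j < l) \<or> (k < i \<and> i \<le> l \<and> l < j))"

definition strong :: "nat \<Rightarrow> int list list \<Rightarrow> nat \<times> nat \<Rightarrow> bool" where
  "strong n Ps I \<longleftrightarrow> conserved n Ps I \<and> fst I < snd I
     \<and> (\<forall>J. conserved n Ps J \<longrightarrow> \<not> overlap I J)"

definition is_frontier_set :: "nat \<Rightarrow> int list list \<Rightarrow> nat \<times> nat \<Rightarrow> nat set \<Rightarrow> bool" where
  "is_frontier_set n Ps I F \<longleftrightarrow> fst I \<in> F \<and> snd I \<in> F \<and> F \<subseteq> ivl I
     \<and> (\<forall>x\<in>F. \<forall>y\<in>F. x < y \<longrightarrow> conserved n Ps (x, y))"

definition frontiers :: "nat \<Rightarrow> int list list \<Rightarrow> nat \<times> nat \<Rightarrow> nat set" where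
  "frontiers n Ps I = \<Union>{F. is_frontier_set n Ps I F}"

definition container :: "nat \<Rightarrow> int list list \<Rightarrow> nat \<times> nat \<Rightarrow> nat \<times> nat" where
  "container n Ps I = (THE S. strong n Ps S \<and> ivl I \<subseteq> ivl S
     \<and> (\<forall>S'. strong n Ps S' \<and> ivl I \<subseteq> ivl S' \<longrightarrow> ivl S \<subseteq> ivl S'))"

end

theory Submission
  imports Defs
begin

text \<open>A strong interval S cannot overlap any conserved interval, and the frontiers of J cut J
  into conserved pieces. So if some frontier f of J lies in S, then each endpoint of J lying
  outside S would yield a conserved interval overlapping S: either the piece between f and that
  endpoint directly, or, when f is an endpoint of S, that piece shortened by the standard fact
  that if (a..c) and (b..c) are conserved then so is (a..b) (and symmetrically). Hence the strong
  intervals containing I are exactly those containing J, and the containers coincide.\<close>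

definition block_at :: "int list \<Rightarrow> nat \<Rightarrow> nat \<Rightarrow> nat \<Rightarrow> bool" where
  "block_at p i a c \<longleftrightarrow> i + (c - a) < length p
     \<and> (\<lambda>t. nat \<bar>p ! t\<bar>) ` {i..i + (c - a)} = {a..c}
     \<and> (p ! i = int a \<and> p ! (i + (c - a)) = int c \<or> p ! i = - int c \<and> p ! (i + (c - a)) = - int a)"

lemma abs_image_take_drop:
  fixes p :: "int list"
  assumes "i + k < length p"
  shows "(\<lambda>x. nat \<bar>x\<bar>) ` set (take (k + 1) (drop i p)) = (\<lambda>t. nat \<bar>p ! t\<bar>) ` {i..i + k}"
proof -
  have "set (take (k + 1) (drop i p)) = (!) p ` {i..i + k}"
  proof (intro equalityI subsetI)
    fix x assume "x \<in> set (take (k + 1) (drop i p))"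
    then obtain t where "t < length (take (k + 1) (drop i p))" "x = take (k + 1) (drop i p) ! t"
      by (metis in_set_conv_nth)
    then have "t \<le> k" "x = p ! (i + t)" using assms by auto
    then show "x \<in> (!) p ` {i..i + k}" by force
  next
    fix x assume "x \<in> (!) p ` {i..i + k}"
    then obtain t where t: "i \<le> t" "t \<le> i + k" "x = p ! t" by auto
    then have "x = take (k + 1) (drop i p) ! (t - i)" "t - i < length (take (k + 1) (drop i p))"
      using assms by auto
    then show "x \<in> set (take (k + 1) (drop i p))" by (metis nth_mem)
  qed
  then show ?thesis by (simp add: image_image)
qed

lemma conserved_iff_block_at:
  assumes "a < c"
  shows "conserved n Ps (a, c) \<longleftrightarrow> 1 \<le> a \<and> c \<le> n \<and> (\<forall>p\<in>set Ps. \<exists>i. block_at p i a c)"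
  using assms abs_image_take_drop unfolding conserved_def block_at_def Let_def fst_conv snd_conv
  by (smt (verit) less_imp_le)

lemma abs_nth_eq_imp_eq:
  fixes p :: "int list"
  assumes "distinct (map (\<lambda>x. nat \<bar>x\<bar>) p)" "s < length p" "t < length p"
    and "nat \<bar>p ! s\<bar> = nat \<bar>p ! t\<bar>"
  shows "s = t"
  using assms nth_eq_iff_index_eq[of "map (\<lambda>x. nat \<bar>x\<bar>) p"] by simp

lemma nth_eq_uminus_nth_imp_zero:
  fixes p :: "int list"
  assumes "distinct (map (\<lambda>x. nat \<bar>x\<bar>) p)" "s < length p" "t < length p"
    and "p ! s = - p ! t"
  shows "p ! t = 0"
  using abs_nth_eq_imp_eq[OF assms(1-3)] assms(4) by simp

lemma inj_on_image_split:
  fixes lo m hi :: "'a::linorder"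
  assumes "inj_on h {lo..hi}" "lo \<le> m" "m \<le> hi"
  shows "h ` {lo..m} = (h ` {lo..hi} - h ` {m..hi}) \<union> {h m}"
    and "h ` {m..hi} = (h ` {lo..hi} - h ` {lo..m}) \<union> {h m}"
proof -
  have "h ` ({lo..hi} - {m..hi}) = h ` {lo..hi} - h ` {m..hi}"
    using assms by (intro inj_on_image_set_diff) auto
  moreover have "h ` ({lo..hi} - {lo..m}) = h ` {lo..hi} - h ` {lo..m}"
    using assms by (intro inj_on_image_set_diff) auto
  moreover have "{lo..m} = ({lo..hi} - {m..hi}) \<union> {m}"
    and "{m..hi} = ({lo..hi} - {lo..m}) \<union> {m}"
    using assms(2,3) by auto
  ultimately show "h ` {lo..m} = (h ` {lo..hi} - h ` {m..hi}) \<union> {h m}"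
    and "h ` {m..hi} = (h ` {lo..hi} - h ` {lo..m}) \<union> {h m}"
    by (metis image_Un image_insert image_empty)+
qed

text \<open>Two blocks sharing an endpoint value must have the same orientation, as otherwise that
  value would sit at one position with both signs; the wanted block is then the complement of
  the smaller block inside the larger one, plus the common boundary entry.\<close>

lemma block_at_prefix:
  fixes p :: "int list"
  assumes d: "distinct (map (\<lambda>x. nat \<bar>x\<bar>) p)" and "a < b" "b < c"
    and ac: "block_at p i a c" and bc: "block_at p j b c"
  shows "\<exists>i'. block_at p i' a b"
proof -
  let ?h = "\<lambda>t. nat \<bar>p ! t\<bar>"
  have i: "i + (c - a) < length p" "?h ` {i..i + (c - a)} = {a..c}"
    and j: "j + (c - b) < length p" "?h ` {j..j + (c - b)} = {b..c}"
    using ac bc unfolding block_at_def by auto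
  have inj: "inj_on ?h {i..i + (c - a)}"
    using abs_nth_eq_imp_eq[OF d] i(1) unfolding inj_on_def by auto
  have "i < length p" "j < length p" using i(1) j(1) by linarith+
  from ac bc consider
      (pos) "p ! i = int a" "p ! (i + (c - a)) = int c" "p ! j = int b" "p ! (j + (c - b)) = int c"
    | (neg) "p ! i = - int c" "p ! (i + (c - a)) = - int a" "p ! j = - int c" "p ! (j + (c - b)) = - int b"
    | (mixed) s t where "s < length p" "t < length p" "p ! s = int c" "p ! t = - int c"
    using i(1) j(1) \<open>i < length p\<close> \<open>j < length p\<close> unfolding block_at_def by blast
  then show ?thesis
  proof cases
    case pos
    then have "j = i + (b - a)"
      using abs_nth_eq_imp_eq[OF d j(1) i(1)] \<open>a < b\<close> \<open>b < c\<close> by simp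
    moreover have "?h ` {i..j} = {a..b}"
      using inj_on_image_split(1)[OF inj, of j] i j pos \<open>j = i + (b - a)\<close> \<open>a < b\<close> \<open>b < c\<close>
      by auto
    ultimately have "block_at p i a b"
      using i(1) pos \<open>b < c\<close> unfolding block_at_def by auto
    then show ?thesis ..
  next
    case mixed
    then show ?thesis using nth_eq_uminus_nth_imp_zero[OF d, of s t] \<open>b < c\<close> by simp
  next
    case neg
    then have "j = i" using abs_nth_eq_imp_eq[OF d, of j i] i(1) j(1) by simp
    define m where "m = i + (c - b)"
    have "?h ` {m..i + (c - a)} = {a..b}"
      using inj_on_image_split(2)[OF inj, of m] i j neg \<open>j = i\<close> \<open>a < b\<close> \<open>b < c\<close>
      unfolding m_def by auto
    then have "block_at p m a b"
      using i(1) neg \<open>j = i\<close> \<open>a < b\<close> \<open>b < c\<close> unfolding block_at_def m_def by auto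
    then show ?thesis ..
  qed
qed

lemma block_at_suffix:
  fixes p :: "int list"
  assumes d: "distinct (map (\<lambda>x. nat \<bar>x\<bar>) p)" and "0 < a" "a < b" "b < c"
    and ac: "block_at p i a c" and ab: "block_at p j a b"
  shows "\<exists>i'. block_at p i' b c"
proof -
  let ?h = "\<lambda>t. nat \<bar>p ! t\<bar>"
  have i: "i + (c - a) < length p" "?h ` {i..i + (c - a)} = {a..c}"
    and j: "j + (b - a) < length p" "?h ` {j..j + (b - a)} = {a..b}"
    using ac ab unfolding block_at_def by auto
  have inj: "inj_on ?h {i..i + (c - a)}"
    using abs_nth_eq_imp_eq[OF d] i(1) unfolding inj_on_def by auto
  have "i < length p" "j < length p" using i(1) j(1) by linarith+
  from ac ab consider
      (pos) "p ! i = int a" "p ! (i + (c - a)) = int c" "p ! j = int a" "p ! (j + (b - a)) = int b"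
    | (neg) "p ! i = - int c" "p ! (i + (c - a)) = - int a" "p ! j = - int b" "p ! (j + (b - a)) = - int a"
    | (mixed) s t where "s < length p" "t < length p" "p ! s = int a" "p ! t = - int a"
    using i(1) j(1) \<open>i < length p\<close> \<open>j < length p\<close> unfolding block_at_def by blast
  then show ?thesis
  proof cases
    case pos
    then have "j = i" using abs_nth_eq_imp_eq[OF d, of j i] i(1) j(1) by simp
    define m where "m = i + (b - a)"
    have "?h ` {m..i + (c - a)} = {b..c}"
      using inj_on_image_split(2)[OF inj, of m] i j pos \<open>j = i\<close> \<open>a < b\<close> \<open>b < c\<close>
      unfolding m_def by auto
    then have "block_at p m b c"
      using i(1) pos \<open>j = i\<close> \<open>a < b\<close> \<open>b < c\<close> unfolding block_at_def m_def by auto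
    then show ?thesis ..
  next
    case neg
    then have "j = i + (c - b)"
      using abs_nth_eq_imp_eq[OF d j(1) i(1)] \<open>a < b\<close> \<open>b < c\<close> by simp
    moreover have "?h ` {i..j} = {b..c}"
      using inj_on_image_split(1)[OF inj, of j] i j neg \<open>j = i + (c - b)\<close> \<open>a < b\<close> \<open>b < c\<close>
      by auto
    ultimately have "block_at p i b c"
      using i(1) neg \<open>a < b\<close> unfolding block_at_def by auto
    then show ?thesis ..
  next
    case mixed
    then show ?thesis using nth_eq_uminus_nth_imp_zero[OF d, of s t] \<open>0 < a\<close> by simp
  qed
qed

lemma valid_family_distinct_abs:
  assumes "valid_family n Ps" "p \<in> set Ps"
  shows "distinct (map (\<lambda>x. nat \<bar>x\<bar>) p)"
  using assms unfolding valid_family_def signed_perm_def by blast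

lemma conserved_prefix:
  assumes v: "valid_family n Ps"
    and ac: "conserved n Ps (a, c)" and bc: "conserved n Ps (b, c)" and "a < b" "b < c"
  shows "conserved n Ps (a, b)"
proof -
  have "1 \<le> a" "c \<le> n" using ac \<open>a < b\<close> \<open>b < c\<close> conserved_iff_block_at[of a c] by auto
  moreover have "\<exists>i. block_at p i a b" if "p \<in> set Ps" for p
  proof -
    obtain i j where "block_at p i a c" "block_at p j b c"
      using ac bc \<open>p \<in> set Ps\<close> \<open>a < b\<close> \<open>b < c\<close>
      unfolding conserved_iff_block_at[OF less_trans[OF \<open>a < b\<close> \<open>b < c\<close>]]
        conserved_iff_block_at[OF \<open>b < c\<close>] by blast
    then show ?thesis
      using block_at_prefix[OF valid_family_distinct_abs[OF v that] \<open>a < b\<close> \<open>b < c\<close>] by blast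
  qed
  ultimately show ?thesis using \<open>a < b\<close> \<open>b < c\<close> conserved_iff_block_at[of a b] by auto
qed

lemma conserved_suffix:
  assumes v: "valid_family n Ps"
    and ac: "conserved n Ps (a, c)" and ab: "conserved n Ps (a, b)" and "a < b" "b < c"
  shows "conserved n Ps (b, c)"
proof -
  have "1 \<le> a" "c \<le> n" using ac \<open>a < b\<close> \<open>b < c\<close> conserved_iff_block_at[of a c] by auto
  moreover have "\<exists>i. block_at p i b c" if "p \<in> set Ps" for p
  proof -
    obtain i j where "block_at p i a c" "block_at p j a b"
      using ac ab \<open>p \<in> set Ps\<close> \<open>a < b\<close> \<open>b < c\<close>
      unfolding conserved_iff_block_at[OF less_trans[OF \<open>a < b\<close> \<open>b < c\<close>]]
        conserved_iff_block_at[OF \<open>a < b\<close>] by blast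
    then show ?thesis
      using block_at_suffix[OF valid_family_distinct_abs[OF v that] _ \<open>a < b\<close> \<open>b < c\<close>]
        \<open>1 \<le> a\<close> by simp
  qed
  ultimately show ?thesis using \<open>a < b\<close> \<open>b < c\<close> conserved_iff_block_at[of b c] by auto
qed

lemma frontiers_subset_ivl: "frontiers n Ps I \<subseteq> ivl I"
  unfolding frontiers_def is_frontier_set_def by auto

lemma conserved_to_frontier:
  assumes "f \<in> frontiers n Ps (a, c)"
  shows "a < f \<Longrightarrow> conserved n Ps (a, f)" and "f < c \<Longrightarrow> conserved n Ps (f, c)"
  using assms unfolding frontiers_def is_frontier_set_def by auto

lemma strong_ivl_subset_if_frontier_inside:
  assumes v: "valid_family n Ps" and S: "strong n Ps (s1, s2)"
    and "f \<in> ivl (s1, s2)" and fJ: "f \<in> frontiers n Ps (a, c)"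
  shows "ivl (a, c) \<subseteq> ivl (s1, s2)"
proof -
  have cS: "conserved n Ps (s1, s2)" and "s1 < s2"
    and no_overlap: "\<And>K. conserved n Ps K \<Longrightarrow> \<not> overlap (s1, s2) K"
    using S unfolding strong_def by auto
  have "s1 \<le> f" "f \<le> s2" "a \<le> f" "f \<le> c"
    using \<open>f \<in> ivl (s1, s2)\<close> frontiers_subset_ivl[of n Ps "(a, c)"] fJ unfolding ivl_def
    by auto
  have "s1 \<le> a"
  proof (rule ccontr)
    assume "\<not> s1 \<le> a"
    then have af: "conserved n Ps (a, f)"
      using conserved_to_frontier(1)[OF fJ] \<open>s1 \<le> f\<close> by simp
    show False
    proof (cases "f < s2")
      case True
      then show False using no_overlap[OF af] \<open>\<not> s1 \<le> a\<close> \<open>s1 \<le> f\<close> unfolding overlap_def by simp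
    next
      case False
      then have "conserved n Ps (a, s1)"
        using conserved_prefix[OF v _ cS _ \<open>s1 < s2\<close>] af \<open>\<not> s1 \<le> a\<close> \<open>f \<le> s2\<close> by simp
      then show False
        using no_overlap \<open>\<not> s1 \<le> a\<close> \<open>s1 < s2\<close> unfolding overlap_def by fastforce
    qed
  qed
  moreover have "c \<le> s2"
  proof (rule ccontr)
    assume "\<not> c \<le> s2"
    then have fc: "conserved n Ps (f, c)"
      using conserved_to_frontier(2)[OF fJ] \<open>f \<le> s2\<close> by simp
    show False
    proof (cases "s1 < f")
      case True
      then show False using no_overlap[OF fc] \<open>\<not> c \<le> s2\<close> \<open>f \<le> s2\<close> unfolding overlap_def by simp
    next
      case False
      then have "conserved n Ps (s2, c)"
        using conserved_suffix[OF v _ cS \<open>s1 < s2\<close>] fc \<open>\<not> c \<le> s2\<close> \<open>s1 \<le> f\<close> by simp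
      then show False
        using no_overlap \<open>\<not> c \<le> s2\<close> \<open>s1 < s2\<close> unfolding overlap_def by fastforce
    qed
  qed
  ultimately show ?thesis unfolding ivl_def by auto
qed

lemma container_cong:
  assumes "\<And>S. strong n Ps S \<Longrightarrow> ivl I \<subseteq> ivl S \<longleftrightarrow> ivl J \<subseteq> ivl S"
  shows "container n Ps I = container n Ps J"
  unfolding container_def by (rule arg_cong[where f = The], rule ext) (use assms in blast)

theorem lemma8:
  fixes n :: nat and Ps :: "int list list" and I J :: "nat \<times> nat" and f :: nat
  assumes "valid_family n Ps"
    and "conserved n Ps I" and "conserved n Ps J"
    and "f \<in> frontiers n Ps I \<inter> frontiers n Ps J"
  shows "container n Ps I = container n Ps J"
proof (rule container_cong)
  fix S assume "strong n Ps S"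
  have "f \<in> ivl I" "f \<in> ivl J"
    using assms(4) frontiers_subset_ivl by blast+
  then show "ivl I \<subseteq> ivl S \<longleftrightarrow> ivl J \<subseteq> ivl S"
    using strong_ivl_subset_if_frontier_inside[OF assms(1), of "fst S" "snd S" f]
      \<open>strong n Ps S\<close> assms(4) by (metis Int_iff prod.collapse subsetD)
qed

end
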